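(* Let $n\ge 0$ and $i,j,a,b\in D$ with $a\neq b$, $a\Rightarrow_n b$, $A_i(a)=1$ and $A_j(a)=0$. Define the vector $A_i^*=s_{ab}A_i\in\{0,1\}^D$ by $A_i^*(m)=A_i(m)$ for $m\notin\{a,b\}$, $A_i^*(a)=0$, $A_i^*(b)=1$. If $A_i^*\le A_j$ entrywise, then $i\Rightarrow_{n+1} j$.
   Context: Fix integers $k\ge1$, $d\ge1$, $K=\{1,\dots,k\}$, $D=\{1,\dots,d\}$. The $k$-tree is the set $K^*$ of finite words over $K$ with root the empty word $\epsilon$; $xg$ ($g\in K$) are the children of $x$. $L_n$ is the set of words of length exactly $n$ and $\Delta_n$ the set of words of length at most $n$. $A$ is a $d\times d$ matrix with entries in $\{0,1\}$, and $A_i=(A(i,1),\dots,A(i,d))$ denotes row $i$, with $A_i(m)=A(i,m)$. A (valid) labeling of $\Delta_n$ is a map $\lambda:\Delta_n\to D$ with $A(\lambda(x),\lambda(xg))=1$ for all $x\in\Delta_{n-1}$, $g\in K$. For $p,q\in D$, $p\Rightarrow_n q$ means: for every valid labeling $\lambda$ of $\Delta_n$ with $\lambda(\epsilon)=p$ there is a valid labeling $\lambda'$ of $\Delta_n$ with $\lambda'(\epsilon)=q$ and $\lambda'|_{L_n}=\lambda|_{L_n}$. *)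

theory Defs
  imports Main
begin

text \<open>Words over K = {1..k} are lists of naturals with entries in {1..k};
  the child xg of x is x @ [g]. The 0/1 matrix A is a
  function nat => nat => nat (entries assumed to lie in {0,1} on D x D).\<close>

definition word :: "nat \<Rightarrow> nat list \<Rightarrow> bool" where
  "word k x \<longleftrightarrow> set x \<subseteq> {1..k}"

definition valid_labeling ::
  "nat \<Rightarrow> nat \<Rightarrow> (nat \<Rightarrow> nat \<Rightarrow> nat) \<Rightarrow> nat \<Rightarrow> (nat list \<Rightarrow> nat) \<Rightarrow> bool" where
  "valid_labeling k d A n lam \<longleftrightarrow>
     (\<forall>x. word k x \<and> length x \<le> n \<longrightarrow> lam x \<in> {1..d}) \<and>
     (\<forall>x g. word k x \<and> length x < n \<and> g \<in> {1..k} \<longrightarrow> A (lam x) (lam (x @ [g])) = 1)"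

definition implies_n ::
  "nat \<Rightarrow> nat \<Rightarrow> (nat \<Rightarrow> nat \<Rightarrow> nat) \<Rightarrow> nat \<Rightarrow> nat \<Rightarrow> nat \<Rightarrow> bool" where
  "implies_n k d A n p q \<longleftrightarrow>
     (\<forall>lam. valid_labeling k d A n lam \<and> lam [] = p \<longrightarrow>
        (\<exists>lam'. valid_labeling k d A n lam' \<and> lam' [] = q \<and>
           (\<forall>x. word k x \<and> length x = n \<longrightarrow> lam' x = lam x)))"

definition swap_ab :: "nat \<Rightarrow> nat \<Rightarrow> (nat \<Rightarrow> nat) \<Rightarrow> nat \<Rightarrow> nat" where
  "swap_ab a b v m = (if m = a then 0 else if m = b then 1 else v m)"

end

theory Submission
  imports Defs
begin

text \<open>A labeling of \<open>\<Delta>\<^sub>n\<^sub>+\<^sub>1\<close> rooted at \<open>i\<close> is a root joined to \<open>k\<close> subtree labelings of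
  \<open>\<Delta>\<^sub>n\<close> whose roots are successors of \<open>i\<close>. Hence \<open>i \<Rightarrow>\<^sub>n\<^sub>+\<^sub>1 j\<close> as soon as every successor
  \<open>c\<close> of \<open>i\<close> satisfies \<open>c \<Rightarrow>\<^sub>n c'\<close> for some successor \<open>c'\<close> of \<open>j\<close>: relabel each subtree
  and graft the results under \<open>j\<close>. The hypothesis \<open>s\<^sub>a\<^sub>b A\<^sub>i \<le> A\<^sub>j\<close> provides \<open>c' = b\<close> for
  \<open>c = a\<close> and \<open>c' = c\<close> otherwise.\<close>

lemma word_Cons_iff: "word k (g # x) \<longleftrightarrow> g \<in> {1..k} \<and> word k x"
  unfolding word_def by auto

lemma valid_labeling_Cons:
  assumes "valid_labeling k d A (Suc n) lam" and "g \<in> {1..k}"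
  shows "valid_labeling k d A n (\<lambda>x. lam (g # x))"
  unfolding valid_labeling_def
proof (intro conjI allI impI)
  fix x assume "word k x \<and> length x \<le> n"
  then show "lam (g # x) \<in> {1..d}"
    using assms unfolding valid_labeling_def by (simp add: word_Cons_iff)
next
  fix x h assume "word k x \<and> length x < n \<and> h \<in> {1..k}"
  then have "word k (g # x) \<and> length (g # x) < Suc n \<and> h \<in> {1..k}"
    using assms(2) by (simp add: word_Cons_iff)
  then have "A (lam (g # x)) (lam ((g # x) @ [h])) = 1"
    using assms(1) unfolding valid_labeling_def by blast
  then show "A (lam (g # x)) (lam (g # x @ [h])) = 1"
    by simp
qed

lemma valid_labeling_root_child:
  assumes "valid_labeling k d A (Suc n) lam" and "g \<in> {1..k}"
  shows "A (lam []) (lam [g]) = 1"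
proof -
  have "word k [] \<and> length [] < Suc n \<and> g \<in> {1..k}"
    using assms(2) by (simp add: word_def)
  then show ?thesis
    using assms(1) unfolding valid_labeling_def by fastforce
qed

lemma valid_labeling_graft:
  assumes "j \<in> {1..d}"
    and "\<forall>g\<in>{1..k}. valid_labeling k d A n (L g) \<and> A j (L g []) = 1"
  shows "valid_labeling k d A (Suc n) (\<lambda>x. case x of [] \<Rightarrow> j | g # y \<Rightarrow> L g y)"
  unfolding valid_labeling_def
proof (intro conjI allI impI)
  fix x assume "word k x \<and> length x \<le> Suc n"
  then show "(case x of [] \<Rightarrow> j | g # y \<Rightarrow> L g y) \<in> {1..d}"
    using assms unfolding valid_labeling_def
    by (cases x) (auto simp: word_Cons_iff simp del: atLeastAtMost_iff)
next
  fix x h assume "word k x \<and> length x < Suc n \<and> h \<in> {1..k}"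
  then show "A (case x of [] \<Rightarrow> j | g # y \<Rightarrow> L g y) (case x @ [h] of [] \<Rightarrow> j | g # y \<Rightarrow> L g y) = 1"
    using assms unfolding valid_labeling_def
    by (cases x) (auto simp: word_Cons_iff simp del: atLeastAtMost_iff)
qed

lemma implies_n_refl: "implies_n k d A n p p"
  unfolding implies_n_def by blast

lemma implies_n_Suc_if_successors:
  assumes "j \<in> {1..d}"
    and "\<And>c. c \<in> {1..d} \<Longrightarrow> A i c = 1 \<Longrightarrow> \<exists>c'. A j c' = 1 \<and> implies_n k d A n c c'"
  shows "implies_n k d A (Suc n) i j"
  unfolding implies_n_def
proof (intro allI impI)
  fix lam assume lam: "valid_labeling k d A (Suc n) lam \<and> lam [] = i"
  have "\<exists>L. valid_labeling k d A n L \<and> A j (L []) = 1 \<and>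
      (\<forall>x. word k x \<and> length x = n \<longrightarrow> L x = lam (g # x))" if g: "g \<in> {1..k}" for g
  proof -
    have sub: "valid_labeling k d A n (\<lambda>x. lam (g # x))"
      using lam g by (blast intro: valid_labeling_Cons)
    have "lam [g] \<in> {1..d}"
      using lam g unfolding valid_labeling_def word_def by auto
    moreover have "A i (lam [g]) = 1"
      using lam g valid_labeling_root_child by fastforce
    ultimately obtain c' where "A j c' = 1" and "implies_n k d A n (lam [g]) c'"
      using assms(2) by blast
    with sub show ?thesis unfolding implies_n_def by fastforce
  qed
  then obtain L where L: "\<forall>g\<in>{1..k}. valid_labeling k d A n (L g) \<and> A j (L g []) = 1 \<and>
      (\<forall>x. word k x \<and> length x = n \<longrightarrow> L g x = lam (g # x))"
    by metis
  let ?lam' = "\<lambda>x. case x of [] \<Rightarrow> j | g # y \<Rightarrow> L g y"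
  have "valid_labeling k d A (Suc n) ?lam'"
    using L assms(1) by (blast intro: valid_labeling_graft)
  moreover have "?lam' x = lam x" if "word k x \<and> length x = Suc n" for x
    using that L by (cases x) (auto simp: word_Cons_iff)
  ultimately show "\<exists>lam'. valid_labeling k d A (Suc n) lam' \<and> lam' [] = j \<and>
      (\<forall>x. word k x \<and> length x = Suc n \<longrightarrow> lam' x = lam x)"
    by (intro exI[of _ ?lam']) auto
qed

lemma swap_ab_le_successors:
  assumes "\<forall>p\<in>{1..d}. \<forall>q\<in>{1..d}. A p q \<in> {0, 1}"
    and "j \<in> {1..d}" and "b \<in> {1..d}" and "a \<noteq> b"
    and "\<forall>m\<in>{1..d}. swap_ab a b (A i) m \<le> A j m"
  shows "A j b = 1"
    and "c \<in> {1..d} \<Longrightarrow> c \<noteq> a \<Longrightarrow> A i c = 1 \<Longrightarrow> A j c = 1"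
proof -
  have "A j m = 1" if "m \<in> {1..d}" and "swap_ab a b (A i) m = 1" for m
    using assms(1,2,5) that by force
  then show "A j b = 1"
    and "c \<in> {1..d} \<Longrightarrow> c \<noteq> a \<Longrightarrow> A i c = 1 \<Longrightarrow> A j c = 1"
    using assms(3,4) unfolding swap_ab_def by auto
qed

theorem proposition3p4:
  fixes k d n i j a b :: nat and A :: "nat \<Rightarrow> nat \<Rightarrow> nat"
  assumes "k \<ge> 1" and "d \<ge> 1"
    and "\<forall>p\<in>{1..d}. \<forall>q\<in>{1..d}. A p q \<in> {0, 1}"
    and "i \<in> {1..d}" and "j \<in> {1..d}" and "a \<in> {1..d}" and "b \<in> {1..d}"
    and "a \<noteq> b"
    and "implies_n k d A n a b"
    and "A i a = 1" and "A j a = 0"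
    and "\<forall>m\<in>{1..d}. swap_ab a b (A i) m \<le> A j m"
  shows "implies_n k d A (n + 1) i j"
proof -
  note successors = swap_ab_le_successors[OF assms(3,5,7,8,12)]
  have "\<exists>c'. A j c' = 1 \<and> implies_n k d A n c c'" if "c \<in> {1..d}" and "A i c = 1" for c
  proof (cases "c = a")
    case True
    then show ?thesis using successors(1) \<open>implies_n k d A n a b\<close> by blast
  next
    case False
    then show ?thesis using successors(2) that implies_n_refl by blast
  qed
  then show ?thesis
    using implies_n_Suc_if_successors \<open>j \<in> {1..d}\<close> by simp
qed

end
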